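(* Let $r\geqslant2$ and let $\alpha:\mathrm{GL}_r(k_\mathrm{F})\to\mathrm{R}$ be a function such that $\alpha(ug)=\overline\psi(u)\alpha(g)$ for all $u\in\mathrm{U}_r(k_\mathrm{F})$, $g\in\mathrm{GL}_r(k_\mathrm{F})$. Then for all $g\in\mathrm{GL}_r(k_\mathrm{F})$, $$\frac{1}{|\mathrm{U}_r(k_\mathrm{F})|}\sum_{u\in\mathrm{U}_r(k_\mathrm{F})}\ \sum_{b\in\mathrm{B}^{\mathrm{op}}_{r-1}(k_\mathrm{F})}\overline\psi^{-1}(u)\,\alpha(bug)=\alpha(g).$$
   Context: $k_\mathrm{F}$ is a finite field of characteristic $p$ and $\mathrm{R}$ an algebraically closed field of characteristic $\ell\neq p$. $\mathrm{U}_r(k_\mathrm{F})$ is the group of upper unitriangular $r\times r$ matrices; $\overline\psi:k_\mathrm{F}\to\mathrm{R}^\times$ is a non-trivial character, and $\overline\psi(u):=\overline\psi(u_{1,2}+\dots+u_{r-1,r})$ for $u\in\mathrm{U}_r(k_\mathrm{F})$. $\mathrm{B}^{\mathrm{op}}_{r-1}(k_\mathrm{F})$ is the group of invertible lower triangular $(r-1)\times(r-1)$ matrices, viewed in $\mathrm{GL}_r(k_\mathrm{F})$ via $g\mapsto\mathrm{diag}(g,1)$ (for $r=2$, this is $\{\mathrm{diag}(a,1):a\in k_\mathrm{F}^\times\}$). *)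

theory Defs
  imports "Jordan_Normal_Form.Matrix" "HOL-Computational_Algebra.Polynomial"
begin

text \<open>Matrices are Jordan_Normal_Form matrices; indices run over 0..r-1.\<close>

definition GL :: "nat \<Rightarrow> ('k::field) mat set" where
  "GL r = {g \<in> carrier_mat r r. invertible_mat g}"

definition UT :: "nat \<Rightarrow> ('k::field) mat set" where
  "UT r = {u \<in> carrier_mat r r. (\<forall>i<r. u $$ (i,i) = 1) \<and> (\<forall>i<r. \<forall>j<i. u $$ (i,j) = 0)}"

definition lower_tri :: "nat \<Rightarrow> ('k::field) mat \<Rightarrow> bool" where
  "lower_tri n g \<longleftrightarrow> (\<forall>i<n. \<forall>j<n. i < j \<longrightarrow> g $$ (i,j) = 0)"

text \<open>B^op_{r-1} embedded in GL_r via g |-> diag(g,1).\<close>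
definition Bop :: "nat \<Rightarrow> ('k::field) mat set" where
  "Bop r = (\<lambda>g. four_block_mat g (0\<^sub>m (r-1) 1) (0\<^sub>m 1 (r-1)) (1\<^sub>m 1)) `
     {g \<in> carrier_mat (r-1) (r-1). lower_tri (r-1) g \<and> invertible_mat g}"

text \<open>psi-bar(u) = psi(u_{1,2} + ... + u_{r-1,r}) (0-based indices).\<close>
definition psibar :: "('k \<Rightarrow> 'r) \<Rightarrow> nat \<Rightarrow> ('k::field) mat \<Rightarrow> 'r" where
  "psibar \<psi> r u = \<psi> (\<Sum>i<r-1. u $$ (i, i+1))"

definition alg_closed :: "'r::field itself \<Rightarrow> bool" where
  "alg_closed _ \<longleftrightarrow> (\<forall>p::'r poly. degree p > 0 \<longrightarrow> (\<exists>x. poly p x = 0))"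

end

theory Submission
  imports Defs "Jordan_Normal_Form.Determinant" "HOL-Algebra.Sylow" "HOL-Algebra.Multiplicative_Group"
    "HOL-Computational_Algebra.Primes"
begin

text \<open>
  Exchange the two sums. For \<open>b = 1\<close> each summand equals \<open>\<alpha> g\<close> by the equivariance of \<open>\<alpha>\<close>,
  giving \<open>|U| \<alpha> g\<close>; and \<open>|U|\<close> is a power of \<open>|k|\<close>, hence invertible in \<open>R\<close> because the
  characteristics differ. For \<open>b \<noteq> 1\<close> the inner sum over \<open>U\<close> vanishes: if row \<open>k < r - 1\<close> is the
  last row of \<open>b\<close> differing from the identity and \<open>(k,j)\<close> is an offending entry, then
  \<open>v = 1 + t e\<^sub>j\<^sub>,\<^sub>k\<^sub>+\<^sub>1\<close> satisfies \<open>b v = w b\<close> for some \<open>w \<in> U\<close> with \<open>psibar w = psibar v \<cdot> \<psi> a \<noteq> psibar v\<close>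
  (for suitable \<open>t\<close>), and substituting \<open>u \<mapsto> v u\<close> multiplies the inner sum by
  \<open>psibar w / psibar v \<noteq> 1\<close>.
\<close>

lemma finite_carrier_mat: "finite (carrier_mat n m :: 'a::finite mat set)"
proof (rule finite_subset)
  show "carrier_mat n m \<subseteq> (\<lambda>h. mat n m h) ` (PiE ({..<n} \<times> {..<m}) (\<lambda>_. UNIV :: 'a set))"
  proof
    fix A :: "'a mat" assume A: "A \<in> carrier_mat n m"
    have "A = mat n m (restrict (\<lambda>ij. A $$ ij) ({..<n} \<times> {..<m}))"
      using A by (intro eq_matI) auto
    thus "A \<in> (\<lambda>h. mat n m h) ` (PiE ({..<n} \<times> {..<m}) (\<lambda>_. UNIV :: 'a set))" by auto
  qed
qed (intro finite_imageI finite_PiE, auto)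

subsection \<open>The characteristic of a finite field\<close>

definition additive_group :: "'a::ring monoid" where
  "additive_group = \<lparr>carrier = UNIV, monoid.mult = (+), one = 0\<rparr>"

lemma group_additive_group: "group (additive_group :: 'a::ring monoid)"
  unfolding additive_group_def by (rule groupI) (simp_all add: add.assoc, metis add.left_inverse)

lemma additive_group_pow: "x [^]\<^bsub>(additive_group :: 'a::ring_1 monoid)\<^esub> (n::nat) = of_nat n * x"
  by (induction n) (auto simp: additive_group_def algebra_simps)

lemma prime_dvd_card_field_imp_eq_CHAR:
  fixes l :: nat
  assumes "prime l" "l dvd card (UNIV :: 'k::{finite,field} set)"
  shows "l = CHAR('k)"
proof -
  let ?G = "additive_group :: 'k monoid"
  interpret G: group ?G by (rule group_additive_group)
  have "sylow ?G l 1 (card (UNIV :: 'k set) div l)"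
    unfolding sylow_eq sylow_axioms_def using assms group_additive_group
    by (auto simp: order_def additive_group_def)
  then obtain H where H: "subgroup H ?G" "card H = l"
    using sylow.sylow_thm by fastforce
  have "\<not> H \<subseteq> {0}"
  proof
    assume "H \<subseteq> {0}"
    hence "card H \<le> 1" using card_mono[of "{0}" H] by simp
    thus False using H(2) prime_gt_1_nat[OF assms(1)] by simp
  qed
  then obtain x where x: "x \<in> H" "x \<noteq> 0" by blast
  interpret subgrp: group "?G\<lparr>carrier := H\<rparr>"
    using G.subgroup_imp_group H(1) by blast
  have "x [^]\<^bsub>?G\<lparr>carrier := H\<rparr>\<^esub> order (?G\<lparr>carrier := H\<rparr>) = \<one>\<^bsub>?G\<lparr>carrier := H\<rparr>\<^esub>"
    using subgrp.pow_order_eq_1 x by simp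
  hence "x [^]\<^bsub>?G\<^esub> l = 0"
    using H by (simp add: order_def additive_group_def nat_pow_def)
  hence "of_nat l * x = 0" by (simp add: additive_group_pow)
  hence "CHAR('k) dvd l" using x by (simp add: of_nat_eq_0_iff_char_dvd)
  moreover have "CHAR('k) \<noteq> 1" by simp
  ultimately show ?thesis using assms(1) by (metis prime_nat_iff)
qed

lemma of_nat_card_field_neq_0:
  assumes "CHAR('r::field) \<noteq> CHAR('k::{finite,field})"
  shows "(of_nat (card (UNIV :: 'k set)) :: 'r) \<noteq> 0"
proof
  assume "(of_nat (card (UNIV :: 'k set)) :: 'r) = 0"
  hence dvd: "CHAR('r) dvd card (UNIV :: 'k set)" by (simp add: of_nat_eq_0_iff_char_dvd)
  hence "CHAR('r) > 0" by (intro gr0I) (simp add: card_gt_0_iff)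
  hence "prime CHAR('r)" by (rule prime_CHAR_semidom)
  thus False using dvd assms prime_dvd_card_field_imp_eq_CHAR by blast
qed

lemma invertible_mat_iff_det:
  fixes A :: "'a::field mat"
  assumes A: "A \<in> carrier_mat n n"
  shows "invertible_mat A \<longleftrightarrow> det A \<noteq> 0"
proof
  assume "invertible_mat A"
  then obtain B where B: "A * B = 1\<^sub>m (dim_row A)" "B * A = 1\<^sub>m (dim_row B)"
    unfolding invertible_mat_def inverts_mat_def by auto
  have "dim_col B = n" using B(1) A by (metis index_mult_mat(3) carrier_matD(1) index_one_mat(3))
  moreover have "dim_row B = n" using B(2) A by (metis index_mult_mat(3) carrier_matD(2) index_one_mat(3))
  ultimately have Bc: "B \<in> carrier_mat n n" by auto
  have "det A * det B = 1" using det_mult[OF A Bc] B(1) A by simp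
  thus "det A \<noteq> 0" by auto
next
  assume "det A \<noteq> 0"
  hence "A \<in> Units (ring_mat TYPE('a) n ())" by (rule det_non_zero_imp_unit[OF A])
  then obtain B where "B \<in> carrier_mat n n" "B * A = 1\<^sub>m n" "A * B = 1\<^sub>m n"
    by (auto simp: Units_def ring_mat_simps)
  thus "invertible_mat A" using A unfolding invertible_mat_def inverts_mat_def by auto
qed

lemma GL_iff_det: "A \<in> GL n \<longleftrightarrow> A \<in> carrier_mat n n \<and> det A \<noteq> (0::'a::field)"
  unfolding GL_def using invertible_mat_iff_det by blast

lemma GL_mult: "A \<in> GL n \<Longrightarrow> B \<in> GL n \<Longrightarrow> A * B \<in> GL n"
  unfolding GL_iff_det by (auto simp: det_mult)

lemma GL_left_inverse:
  assumes "A \<in> GL n"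
  obtains B where "B \<in> carrier_mat n n" "B * A = 1\<^sub>m n"
proof -
  have A: "A \<in> carrier_mat n n" "det A \<noteq> 0" using assms GL_iff_det by auto
  hence "A \<in> Units (ring_mat TYPE('a) n ())" by (intro det_non_zero_imp_unit)
  thus thesis using that by (auto simp: Units_def ring_mat_simps)
qed

subsection \<open>Upper unitriangular matrices\<close>

lemma UT_D:
  assumes "u \<in> UT r"
  shows "u \<in> carrier_mat r r" "\<And>i. i < r \<Longrightarrow> u $$ (i,i) = 1"
    "\<And>i j. i < r \<Longrightarrow> j < i \<Longrightarrow> u $$ (i,j) = 0"
  using assms by (auto simp: UT_def)

lemma one_mat_UT: "1\<^sub>m r \<in> UT r"
  by (auto simp: UT_def)

lemma finite_UT: "finite (UT r :: 'k::{finite,field} mat set)"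
  by (rule finite_subset[OF _ finite_carrier_mat]) (auto simp: UT_def)

lemma card_UT: "card (UT r :: 'k::{finite,field} mat set) = card (UNIV :: 'k set) ^ card {(i,j). i < j \<and> j < r}"
proof -
  let ?P = "{(i::nat,j). i < j \<and> j < r}"
  define unitri where "unitri h = mat r r (\<lambda>(i,j). if i = j then 1 else if i < j then h (i,j) else 0)"
    for h :: "nat \<times> nat \<Rightarrow> 'k"
  have "UT r = unitri ` (PiE ?P (\<lambda>_. UNIV))"
  proof
    show "UT r \<subseteq> unitri ` (PiE ?P (\<lambda>_. UNIV))"
    proof
      fix u :: "'k mat" assume u: "u \<in> UT r"
      have "u = unitri (restrict (\<lambda>ij. u $$ ij) ?P)"
      proof (rule eq_matI)
        fix i j assume "i < dim_row (unitri (restrict (\<lambda>ij. u $$ ij) ?P))"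
          "j < dim_col (unitri (restrict (\<lambda>ij. u $$ ij) ?P))"
        hence "i < r" "j < r" by (auto simp: unitri_def)
        thus "u $$ (i, j) = unitri (restrict (\<lambda>ij. u $$ ij) ?P) $$ (i, j)"
          using UT_D[OF u] by (cases i j rule: linorder_cases) (auto simp: unitri_def)
      qed (use UT_D(1)[OF u] in \<open>auto simp: unitri_def\<close>)
      thus "u \<in> unitri ` (PiE ?P (\<lambda>_. UNIV))" by auto
    qed
  qed (auto simp: UT_def unitri_def)
  moreover have "inj_on unitri (PiE ?P (\<lambda>_. UNIV))"
  proof (rule inj_onI)
    fix h1 h2 assume h: "h1 \<in> PiE ?P (\<lambda>_. UNIV)" "h2 \<in> PiE ?P (\<lambda>_. UNIV)" and "unitri h1 = unitri h2"
    hence "unitri h1 $$ (i,j) = unitri h2 $$ (i,j)" for i j by simp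
    moreover have "unitri h $$ (i,j) = h (i,j)" if "i < j" "j < r" for h i j
      using that by (simp add: unitri_def)
    ultimately have "h1 (i,j) = h2 (i,j)" if "i < j" "j < r" for i j
      using that by metis
    hence "h1 x = h2 x" if "x \<in> ?P" for x using that by auto
    thus "h1 = h2" by (rule PiE_ext[OF h])
  qed
  moreover have "finite ?P" by (rule finite_subset[of _ "{..<r} \<times> {..<r}"]) auto
  ultimately show ?thesis by (simp add: card_image card_PiE)
qed

lemma UT_mult_entry:
  assumes v: "v \<in> UT r" and u: "u \<in> UT r" and "i < r" "j < r"
  shows "(v * u) $$ (i,j) = (\<Sum>s\<in>{i..j}. v $$ (i,s) * u $$ (s,j))"
proof -
  have "(v * u) $$ (i,j) = (\<Sum>s\<in>{0..<r}. v $$ (i,s) * u $$ (s,j))"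
    using UT_D(1)[OF v] UT_D(1)[OF u] assms by (simp add: scalar_prod_def)
  also have "\<dots> = (\<Sum>s\<in>{i..j}. v $$ (i,s) * u $$ (s,j))"
    using UT_D(3)[OF v] UT_D(3)[OF u] assms by (intro sum.mono_neutral_right) auto
  finally show ?thesis .
qed

lemma UT_mult: assumes "v \<in> UT r" "u \<in> UT r" shows "v * u \<in> UT r"
  using UT_D(1)[OF assms(1)] UT_D(1)[OF assms(2)] UT_mult_entry[OF assms]
    UT_D(2)[OF assms(1)] UT_D(2)[OF assms(2)]
  unfolding UT_def by auto

lemma UT_mult_superdiag:
  assumes "v \<in> UT r" "u \<in> UT r" "i + 1 < r"
  shows "(v * u) $$ (i,i+1) = v $$ (i,i+1) + u $$ (i,i+1)"
proof -
  have "{i..i+1} = {i, i+1}" by auto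
  thus ?thesis
    using UT_mult_entry[OF assms(1,2), of i "i+1"] assms UT_D(2)[OF assms(1)] UT_D(2)[OF assms(2)]
    by simp
qed

lemma UT_GL: assumes "u \<in> UT r" shows "u \<in> GL r"
proof -
  note u = UT_D[OF assms]
  have "upper_triangular u" using u unfolding upper_triangular_def by auto
  moreover have "diag_mat u = replicate r 1"
    using u by (simp add: diag_mat_def list_eq_iff_nth_eq)
  ultimately have "det u = 1" using det_upper_triangular[OF _ u(1)] by simp
  thus ?thesis using u(1) GL_iff_det by force
qed

lemma bij_betw_UT_left_mult:
  fixes v :: "'k::{finite,field} mat"
  assumes v: "v \<in> UT r"
  shows "bij_betw ((*) v) (UT r) (UT r)"
proof -
  obtain B where B: "B \<in> carrier_mat r r" "B * v = 1\<^sub>m r"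
    using GL_left_inverse[OF UT_GL[OF v]] by blast
  have inj: "inj_on ((*) v) (UT r)"
  proof (rule inj_onI)
    fix u1 u2 assume u: "u1 \<in> UT r" "u2 \<in> UT r" "v * u1 = v * u2"
    hence "B * (v * u1) = B * (v * u2)" by simp
    thus "u1 = u2"
      using B UT_D(1)[OF v] UT_D(1)[OF u(1)] UT_D(1)[OF u(2)]
      by (simp add: assoc_mult_mat[symmetric, of B r r v r])
  qed
  moreover have "(*) v ` UT r \<subseteq> UT r" using UT_mult[OF v] by auto
  ultimately show ?thesis
    unfolding bij_betw_def by (metis card_image card_subset_eq finite_UT)
qed

lemma psibar_mult:
  assumes add: "\<And>a b. \<psi> (a + b) = \<psi> a * \<psi> b" and "v \<in> UT r" "u \<in> UT r"
  shows "psibar \<psi> r (v * u) = psibar \<psi> r v * psibar \<psi> r u"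
proof -
  have "(\<Sum>i<r-1. (v * u) $$ (i, i+1)) = (\<Sum>i<r-1. v $$ (i, i+1) + u $$ (i, i+1))"
    using UT_mult_superdiag[OF assms(2,3)] by (intro sum.cong) auto
  thus ?thesis unfolding psibar_def by (simp add: sum.distrib add)
qed

subsection \<open>The embedded lower triangular group\<close>

lemma Bop_D:
  assumes b: "b \<in> Bop r" and r: "r \<ge> 1"
  shows "b \<in> carrier_mat r r" "\<And>i j. i < j \<Longrightarrow> j < r \<Longrightarrow> b $$ (i,j) = 0"
    "\<And>j. j < r \<Longrightarrow> b $$ (r-1,j) = (if j = r-1 then 1 else 0)" "b \<in> GL r"
proof -
  obtain c where c: "c \<in> carrier_mat (r-1) (r-1)" "lower_tri (r-1) c" "invertible_mat c"
    and bc: "b = four_block_mat c (0\<^sub>m (r-1) 1) (0\<^sub>m 1 (r-1)) (1\<^sub>m 1)"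
    using b unfolding Bop_def by auto
  have rr: "r - 1 + 1 = r" using r by simp
  show b_carrier: "b \<in> carrier_mat r r"
    using c(1) bc four_block_carrier_mat[OF c(1), of "1\<^sub>m 1" 1 1] rr by simp
  show "\<And>i j. i < j \<Longrightarrow> j < r \<Longrightarrow> b $$ (i,j) = 0"
    using c bc rr unfolding lower_tri_def by auto
  show "\<And>j. j < r \<Longrightarrow> b $$ (r-1,j) = (if j = r-1 then 1 else 0)"
    using c bc rr by auto
  have "det b = det c * det (1\<^sub>m 1 :: 'a mat)"
    unfolding bc by (rule det_four_block_mat_lower_left_zero[OF c(1)]) auto
  hence "det b \<noteq> 0" using c(3) invertible_mat_iff_det[OF c(1)] by simp
  thus "b \<in> GL r" using b_carrier GL_iff_det by blast
qed

lemma one_mat_Bop: assumes "r \<ge> 1" shows "1\<^sub>m r \<in> Bop r"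
proof -
  have "1\<^sub>m r = four_block_mat (1\<^sub>m (r-1)) (0\<^sub>m (r-1) 1) (0\<^sub>m 1 (r-1)) (1\<^sub>m 1)"
    using assms by simp
  moreover have "invertible_mat (1\<^sub>m (r-1) :: 'a mat)"
    using invertible_mat_iff_det[of "1\<^sub>m (r-1)" "r-1"] by simp
  ultimately show ?thesis unfolding Bop_def lower_tri_def
    by (intro image_eqI[where x="1\<^sub>m (r-1)"]) auto
qed

lemma finite_Bop: "finite (Bop r :: 'k::{finite,field} mat set)"
  unfolding Bop_def
  by (rule finite_imageI, rule finite_subset[OF _ finite_carrier_mat[of "r-1" "r-1"]]) auto

lemma Bop_last_nonidentity_row:
  assumes b: "b \<in> Bop r" and r: "r \<ge> 1" and nb: "b \<noteq> 1\<^sub>m r"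
  obtains k j where "k + 1 < r" "j \<le> k" "b $$ (k,j) \<noteq> (if k = j then 1 else 0)"
    "\<And>i q. k < i \<Longrightarrow> i < r \<Longrightarrow> q < r \<Longrightarrow> b $$ (i,q) = (if i = q then 1 else 0)"
proof -
  note b_props = Bop_D[OF b r]
  define K where "K = {i. i < r \<and> (\<exists>q<r. b $$ (i,q) \<noteq> (if i = q then 1 else 0))}"
  have "K \<noteq> {}"
  proof
    assume "K = {}"
    hence "b = 1\<^sub>m r" using b_props(1) by (intro eq_matI) (auto simp: K_def)
    thus False using nb by simp
  qed
  moreover have K_finite: "finite K" by (auto simp: K_def)
  ultimately have "Max K \<in> K" by simp
  then obtain j where k: "Max K < r" and j: "j < r" "b $$ (Max K,j) \<noteq> (if Max K = j then 1 else 0)"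
    by (auto simp: K_def)
  have "Max K \<noteq> r - 1" using j b_props(3)[of j] by (auto split: if_splits)
  hence "Max K + 1 < r" using k by simp
  moreover have "j \<le> Max K" using j b_props(2)[of "Max K" j] by (cases "j \<le> Max K") auto
  moreover have "b $$ (i,q) = (if i = q then 1 else 0)" if "Max K < i" "i < r" "q < r" for i q
  proof (rule ccontr)
    assume "b $$ (i,q) \<noteq> (if i = q then 1 else 0)"
    hence "i \<in> K" using that unfolding K_def by blast
    thus False using that Max_ge[OF K_finite] by fastforce
  qed
  ultimately show thesis using that j by blast
qed

text \<open>
  \<open>b (t e\<^sub>j\<^sub>,\<^sub>k\<^sub>+\<^sub>1) = t (b e\<^sub>j) e\<^sub>k\<^sub>+\<^sub>1\<^sup>T\<close>, and \<open>e\<^sub>k\<^sub>+\<^sub>1\<^sup>T = e\<^sub>k\<^sub>+\<^sub>1\<^sup>T b\<close> because row \<open>k+1\<close> of \<open>b\<close> is the standard basis row.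
\<close>
lemma mult_elementary_eq_column_mult:
  fixes b :: "'a::field mat"
  assumes b: "b \<in> carrier_mat r r" and "k + 1 < r" "j < r"
    and row: "\<And>q. q < r \<Longrightarrow> b $$ (k+1,q) = (if q = k+1 then 1 else 0)"
    and col: "\<And>p. k < p \<Longrightarrow> p < r \<Longrightarrow> b $$ (p,j) = 0"
  shows "b * (1\<^sub>m r + mat r r (\<lambda>(p,q). if p = j \<and> q = k+1 then t else 0))
       = (1\<^sub>m r + mat r r (\<lambda>(p,q). if q = k+1 \<and> p \<le> k then t * b $$ (p,j) else 0)) * b"
    (is "b * (1\<^sub>m r + ?E) = (1\<^sub>m r + ?F) * b")
proof -
  have E: "?E \<in> carrier_mat r r" and F: "?F \<in> carrier_mat r r" by auto
  have bE: "(b * ?E) $$ (p,q) = (if q = k+1 then b $$ (p,j) * t else 0)" if "p < r" "q < r" for p q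
  proof -
    have "(b * ?E) $$ (p,q) = (\<Sum>s\<in>{0..<r}. b $$ (p,s) * ?E $$ (s,q))"
      using that b by (simp add: scalar_prod_def)
    also have "\<dots> = (\<Sum>s\<in>{0..<r}. if s = j then b $$ (p,j) * (if q = k+1 then t else 0) else 0)"
      using that by (intro sum.cong) auto
    finally show ?thesis using \<open>j < r\<close> by simp
  qed
  have Fb: "(?F * b) $$ (p,q) = (if p \<le> k then t * b $$ (p,j) else 0) * b $$ (k+1,q)"
    if "p < r" "q < r" for p q
  proof -
    have "(?F * b) $$ (p,q) = (\<Sum>s\<in>{0..<r}. ?F $$ (p,s) * b $$ (s,q))"
      using that b by (simp add: scalar_prod_def)
    also have "\<dots> = (\<Sum>s\<in>{0..<r}.
        if s = k+1 then (if p \<le> k then t * b $$ (p,j) else 0) * b $$ (k+1,q) else 0)"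
      using that by (intro sum.cong) auto
    finally show ?thesis using \<open>k + 1 < r\<close> by simp
  qed
  have "b * ?E = ?F * b"
  proof (rule eq_matI)
    fix p q assume "p < dim_row (?F * b)" "q < dim_col (?F * b)"
    hence pq: "p < r" "q < r" using b by auto
    show "(b * ?E) $$ (p,q) = (?F * b) $$ (p,q)"
      unfolding bE[OF pq] Fb[OF pq] using row[OF pq(2)] col[OF _ pq(1)] by auto
  qed (use b in auto)
  have "b * (1\<^sub>m r + ?E) = b * 1\<^sub>m r + b * ?E"
    by (rule mult_add_distrib_mat[OF b one_carrier_mat E])
  also have "\<dots> = 1\<^sub>m r * b + ?F * b" using b \<open>b * ?E = ?F * b\<close> by simp
  also have "\<dots> = (1\<^sub>m r + ?F) * b" by (rule add_mult_distrib_mat[OF one_carrier_mat F b, symmetric])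
  finally show ?thesis .
qed

lemma Bop_twist:
  fixes \<psi> :: "'k::field \<Rightarrow> 'r::field"
  assumes b: "b \<in> Bop r" and r: "r \<ge> 1" and nb: "b \<noteq> 1\<^sub>m r"
    and add: "\<And>x y. \<psi> (x + y) = \<psi> x * \<psi> y" and a: "\<psi> a \<noteq> 1" and nz: "\<And>x. \<psi> x \<noteq> 0"
  obtains v w where "v \<in> UT r" "w \<in> UT r" "b * v = w * b" "psibar \<psi> r w \<noteq> psibar \<psi> r v"
proof -
  obtain k j where kr: "k + 1 < r" and jk: "j \<le> k"
    and kj: "b $$ (k,j) \<noteq> (if k = j then 1 else 0)"
    and rows: "\<And>i q. k < i \<Longrightarrow> i < r \<Longrightarrow> q < r \<Longrightarrow> b $$ (i,q) = (if i = q then 1 else 0)"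
    using Bop_last_nonidentity_row[OF b r nb] by blast
  have c: "b $$ (k,j) - (if k = j then 1 else 0) \<noteq> 0" using kj by simp
  define t where "t = a / (b $$ (k,j) - (if k = j then 1 else 0))"
  define v where "v = 1\<^sub>m r + mat r r (\<lambda>(p,q). if p = j \<and> q = k+1 then t else 0)"
  define w where "w = 1\<^sub>m r + mat r r (\<lambda>(p,q). if q = k+1 \<and> p \<le> k then t * b $$ (p,j) else 0)"
  have "b * v = w * b"
    unfolding v_def w_def using kr jk rows[of "k+1"] rows[of _ j]
    by (intro mult_elementary_eq_column_mult[OF Bop_D(1)[OF b r]]) auto
  moreover have "v \<in> UT r" "w \<in> UT r" using jk by (auto simp: UT_def v_def w_def)
  moreover have "psibar \<psi> r v = \<psi> (if j = k then t else 0)"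
  proof -
    have "(\<Sum>i<r-1. v $$ (i, i+1)) = (\<Sum>i<r-1. if i = j then (if j = k then t else 0) else 0)"
      by (intro sum.cong) (auto simp: v_def)
    moreover have "j < r - 1" using jk kr by simp
    ultimately show ?thesis unfolding psibar_def by simp
  qed
  moreover have "psibar \<psi> r w = \<psi> (t * b $$ (k,j))"
  proof -
    have "(\<Sum>i<r-1. w $$ (i, i+1)) = (\<Sum>i<r-1. if i = k then t * b $$ (k,j) else 0)"
      by (intro sum.cong) (auto simp: w_def)
    moreover have "k < r - 1" using kr by simp
    ultimately show ?thesis unfolding psibar_def by simp
  qed
  moreover have "t * b $$ (k,j) = (if j = k then t else 0) + a"
    using c by (auto simp: t_def field_simps)
  ultimately have "psibar \<psi> r w = psibar \<psi> r v * \<psi> a" by (simp add: add)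
  hence "psibar \<psi> r w \<noteq> psibar \<psi> r v" using a nz \<open>psibar \<psi> r v = _\<close> by auto
  thus thesis using that \<open>b * v = w * b\<close> \<open>v \<in> UT r\<close> \<open>w \<in> UT r\<close> by blast
qed

lemma twisted_sum_eq_0:
  fixes \<psi> :: "'k::{finite,field} \<Rightarrow> 'r::field" and \<alpha> :: "'k mat \<Rightarrow> 'r"
  assumes add: "\<And>x y. \<psi> (x + y) = \<psi> x * \<psi> y" and nz: "\<And>x. \<psi> x \<noteq> 0"
    and equivariant: "\<And>u h. u \<in> UT r \<Longrightarrow> h \<in> GL r \<Longrightarrow> \<alpha> (u * h) = psibar \<psi> r u * \<alpha> h"
    and b: "b \<in> GL r" and g: "g \<in> GL r"
    and v: "v \<in> UT r" and w: "w \<in> UT r" and bvw: "b * v = w * b"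
    and vw: "psibar \<psi> r w \<noteq> psibar \<psi> r v"
  shows "(\<Sum>u\<in>UT r. inverse (psibar \<psi> r u) * \<alpha> (b * u * g)) = 0"
proof -
  define S where "S = (\<Sum>u\<in>UT r. inverse (psibar \<psi> r u) * \<alpha> (b * u * g))"
  define c where "c = psibar \<psi> r w / psibar \<psi> r v"
  have carrier: "b \<in> carrier_mat r r" "g \<in> carrier_mat r r" "v \<in> carrier_mat r r" "w \<in> carrier_mat r r"
    using b g UT_D(1)[OF v] UT_D(1)[OF w] by (auto simp: GL_def)
  have shift: "inverse (psibar \<psi> r (v * u)) * \<alpha> (b * (v * u) * g)
      = c * (inverse (psibar \<psi> r u) * \<alpha> (b * u * g))" if u: "u \<in> UT r" for u
  proof -
    have uc: "u \<in> carrier_mat r r" using UT_D(1)[OF u] .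
    have "b * (v * u) = (b * v) * u" by (rule assoc_mult_mat[OF carrier(1,3) uc, symmetric])
    also have "\<dots> = w * (b * u)" unfolding bvw by (rule assoc_mult_mat[OF carrier(4,1) uc])
    finally have "b * (v * u) * g = w * (b * u) * g" by simp
    also have "\<dots> = w * (b * u * g)"
      by (rule assoc_mult_mat[OF carrier(4) mult_carrier_mat[OF carrier(1) uc] carrier(2)])
    finally have "b * (v * u) * g = w * (b * u * g)" .
    moreover have "b * u * g \<in> GL r" using GL_mult[OF GL_mult[OF b UT_GL[OF u]] g] .
    ultimately have "\<alpha> (b * (v * u) * g) = psibar \<psi> r w * \<alpha> (b * u * g)"
      using equivariant[OF w] by simp
    moreover have "psibar \<psi> r (v * u) = psibar \<psi> r v * psibar \<psi> r u"
      by (rule psibar_mult[OF add v u])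
    ultimately show ?thesis by (simp add: c_def field_simps)
  qed
  have "S = (\<Sum>u\<in>UT r. inverse (psibar \<psi> r (v * u)) * \<alpha> (b * (v * u) * g))"
    unfolding S_def by (rule sum.reindex_bij_betw[OF bij_betw_UT_left_mult[OF v], symmetric])
  also have "\<dots> = c * S"
    unfolding S_def sum_distrib_left by (rule sum.cong) (simp_all add: shift)
  finally have "(c - 1) * S = 0" by (simp add: algebra_simps)
  moreover have "c \<noteq> 1" using vw nz by (simp add: c_def psibar_def)
  ultimately show ?thesis by (simp add: S_def)
qed

lemma sum_Bop_twisted_sums:
  fixes \<psi> :: "'k::{finite,field} \<Rightarrow> 'r::field" and \<alpha> :: "'k mat \<Rightarrow> 'r"
  assumes add: "\<And>x y. \<psi> (x + y) = \<psi> x * \<psi> y" and nz: "\<And>x. \<psi> x \<noteq> 0" and a: "\<psi> a \<noteq> 1"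
    and equivariant: "\<And>u h. u \<in> UT r \<Longrightarrow> h \<in> GL r \<Longrightarrow> \<alpha> (u * h) = psibar \<psi> r u * \<alpha> h"
    and r: "r \<ge> 1" and g: "g \<in> GL r"
  shows "(\<Sum>b\<in>Bop r. \<Sum>u\<in>UT r. inverse (psibar \<psi> r u) * \<alpha> (b * u * g))
    = of_nat (card (UT r :: 'k mat set)) * \<alpha> g"
proof -
  have "(\<Sum>b\<in>Bop r. \<Sum>u\<in>UT r. inverse (psibar \<psi> r u) * \<alpha> (b * u * g))
      = (\<Sum>u\<in>UT r. inverse (psibar \<psi> r u) * \<alpha> (1\<^sub>m r * u * g))"
  proof (rule sum.mono_neutral_right[OF finite_Bop, of "{1\<^sub>m r}", simplified])
    show "1\<^sub>m r \<in> Bop r" using one_mat_Bop[OF r] .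
    show "\<forall>b\<in>Bop r - {1\<^sub>m r}. (\<Sum>u\<in>UT r. inverse (psibar \<psi> r u) * \<alpha> (b * u * g)) = 0"
    proof
      fix b :: "'k mat" assume b: "b \<in> Bop r - {1\<^sub>m r}"
      then obtain v w where "v \<in> UT r" "w \<in> UT r" "b * v = w * b" "psibar \<psi> r w \<noteq> psibar \<psi> r v"
        using Bop_twist[OF _ r _ add a nz] by blast
      thus "(\<Sum>u\<in>UT r. inverse (psibar \<psi> r u) * \<alpha> (b * u * g)) = 0"
        using twisted_sum_eq_0[OF add nz equivariant _ g] Bop_D(4)[OF _ r] b by blast
    qed
  qed
  also have "\<dots> = (\<Sum>u\<in>(UT r :: 'k mat set). \<alpha> g)"
  proof (rule sum.cong[OF refl])
    fix u :: "'k mat" assume u: "u \<in> UT r"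
    hence "1\<^sub>m r * u * g = u * g" using UT_D(1)[OF u] by simp
    thus "inverse (psibar \<psi> r u) * \<alpha> (1\<^sub>m r * u * g) = \<alpha> g"
      using equivariant[OF u g] nz by (simp add: psibar_def)
  qed
  finally show ?thesis by simp
qed

lemma additive_character_eq_0_or_neq_0:
  fixes \<psi> :: "'a::ab_group_add \<Rightarrow> 'r::field"
  assumes "\<And>x y. \<psi> (x + y) = \<psi> x * \<psi> y"
  shows "(\<forall>x. \<psi> x = 0) \<or> (\<forall>x. \<psi> x \<noteq> 0)"
proof -
  have "\<psi> x = \<psi> x * \<psi> 0" "\<psi> 0 = \<psi> x * \<psi> (- x)" for x
    using assms[of x 0] assms[of x "- x"] by simp_all
  thus ?thesis by (metis mult_zero_left mult_zero_right)
qed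

theorem mainTheorem12:
  fixes \<psi> :: "'k::{finite,field} \<Rightarrow> 'r::field"
    and \<alpha> :: "'k mat \<Rightarrow> 'r"
    and r :: nat
  assumes "alg_closed TYPE('r)"
    and "CHAR('r) \<noteq> CHAR('k)"
    and "\<And>a b. \<psi> (a + b) = \<psi> a * \<psi> b"
    and "\<exists>a. \<psi> a \<noteq> 1"
    and "r \<ge> 2"
    and "\<And>u g. u \<in> UT r \<Longrightarrow> g \<in> GL r \<Longrightarrow> \<alpha> (u * g) = psibar \<psi> r u * \<alpha> g"
    and "g \<in> GL r"
  shows "(1 / of_nat (card (UT r :: 'k mat set))) *
           (\<Sum>u\<in>UT r. \<Sum>b\<in>Bop r. inverse (psibar \<psi> r u) * \<alpha> (b * u * g)) = \<alpha> g"
proof (cases "\<forall>x. \<psi> x = 0")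
  case True
  thus ?thesis using assms(6)[OF one_mat_UT assms(7)] assms(7) by (auto simp: psibar_def GL_def)
next
  case False
  hence nz: "\<psi> x \<noteq> 0" for x using additive_character_eq_0_or_neq_0[OF assms(3)] by blast
  obtain a where "\<psi> a \<noteq> 1" using assms(4) by blast
  have "(\<Sum>u\<in>UT r. \<Sum>b\<in>Bop r. inverse (psibar \<psi> r u) * \<alpha> (b * u * g))
      = of_nat (card (UT r :: 'k mat set)) * \<alpha> g"
    using sum_Bop_twisted_sums[OF assms(3) nz \<open>\<psi> a \<noteq> 1\<close> assms(6)] assms(5,7)
    by (simp add: sum.swap[of _ "UT r"])
  thus ?thesis using of_nat_card_field_neq_0[OF assms(2)] by (simp add: card_UT)
qed

end
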